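(* Let $G\in M_3(\mathbb{R})$ have eigenvalues $\lambda_1,\lambda_2,\lambda_3$ (counted with algebraic multiplicity) with $\Gamma_k:=\operatorname{Re}\lambda_k\ge 0$ for $k=1,2,3$, and let $f(x)=\det(x\mathbb{1}-G)$ be its characteristic polynomial. Then for every $\alpha\in[1,2]$, $$\Gamma_k\le \tfrac{1}{\alpha}\operatorname{Tr}G\ \text{ for all } k=1,2,3 \quad\Longleftrightarrow\quad f\!\left(\tfrac{\operatorname{Tr}G}{\alpha}\right)\ge 0 .$$ *)

theory Defs
  imports "Jordan_Normal_Form.Char_Poly"
begin

definition mat_trace :: "'a :: comm_ring_1 mat \<Rightarrow> 'a" where
  "mat_trace A = (\<Sum>i<dim_row A. A $$ (i, i))"

end

(*
  Over the complex numbers the characteristic polynomial is (x - l1)(x - l2)(x - l3), where the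
  roots are closed under conjugation and sum to Tr G (compare the x^2 coefficients).  Put
  t = Tr G / alpha; since alpha <= 2 and all Re lk >= 0, the real parts sum to at most 2t, so at
  most one of them exceeds t.  If all roots are real, f(t) is a product of three real factors of
  which at most one is negative.  Otherwise the roots are w, cnj w, r with r real, so
  f(t) = |t - w|^2 (t - r), and Re w <= t holds automatically.  In both cases f(t) >= 0 exactly
  when no real part exceeds t.
*)

theory Submission
  imports Defs
begin

lemma det_2x2:
  assumes "(A :: 'a :: comm_ring_1 mat) \<in> carrier_mat 2 2"
  shows "det A = A $$ (0,0) * A $$ (1,1) - A $$ (0,1) * A $$ (1,0)"
proof -
  have "det A = (\<Sum>i<2. A $$ (i,0) * cofactor A i 0)"
    by (rule laplace_expansion_column[OF assms]) simp
  also have "\<dots> = A $$ (0,0) * A $$ (1,1) - A $$ (0,1) * A $$ (1,0)"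
    using assms by (simp add: numeral_2_eq_2 cofactor_def det_single mat_delete_def algebra_simps)
  finally show ?thesis .
qed

lemma det_3x3:
  assumes "(A :: 'a :: comm_ring_1 mat) \<in> carrier_mat 3 3"
  shows "det A = A $$ (0,0) * (A $$ (1,1) * A $$ (2,2) - A $$ (1,2) * A $$ (2,1))
    - A $$ (1,0) * (A $$ (0,1) * A $$ (2,2) - A $$ (0,2) * A $$ (2,1))
    + A $$ (2,0) * (A $$ (0,1) * A $$ (1,2) - A $$ (0,2) * A $$ (1,1))"
proof -
  have det_minor: "det (mat (Suc (Suc 0)) (Suc (Suc 0)) f) = f (0,0) * f (1,1) - f (0,1) * f (1,0)"
    for f :: "nat \<times> nat \<Rightarrow> 'a"
    using det_2x2[of "mat 2 2 f"] by (simp add: numeral_2_eq_2)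
  have "det A = (\<Sum>i<3. A $$ (i,0) * cofactor A i 0)"
    by (rule laplace_expansion_column[OF assms]) simp
  also have "\<dots> = A $$ (0,0) * (A $$ (1,1) * A $$ (2,2) - A $$ (1,2) * A $$ (2,1))
    - A $$ (1,0) * (A $$ (0,1) * A $$ (2,2) - A $$ (0,2) * A $$ (2,1))
    + A $$ (2,0) * (A $$ (0,1) * A $$ (1,2) - A $$ (0,2) * A $$ (1,1))"
    using assms
    by (simp add: numeral_3_eq_3 numeral_2_eq_2 cofactor_def mat_delete_def det_minor algebra_simps)
  finally show ?thesis .
qed

lemma coeff_char_poly_3x3:
  assumes A: "(A :: 'a :: comm_ring_1 mat) \<in> carrier_mat 3 3"
  shows "coeff (char_poly A) 2 = - mat_trace A"
proof -
  have "char_poly_matrix A \<in> carrier_mat 3 3" using A by simp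
  from det_3x3[OF this] A show ?thesis
    by (simp add: char_poly_def char_poly_matrix_def mat_trace_def coeff_mult
        numeral_2_eq_2 numeral_3_eq_3 algebra_simps)
qed

lemma sum_roots_char_poly_3x3:
  assumes "(A :: 'a :: comm_ring_1 mat) \<in> carrier_mat 3 3"
    and "char_poly A = [:-l1, 1:] * [:-l2, 1:] * [:-l3, 1:]"
  shows "l1 + l2 + l3 = mat_trace A"
  using coeff_char_poly_3x3[OF assms(1)] unfolding assms(2)
  by (simp add: coeff_mult numeral_2_eq_2 algebra_simps)

lemma conj_closed_triple_cases:
  fixes l1 l2 l3 :: complex
  assumes closed: "\<And>z. z \<in> {l1, l2, l3} \<Longrightarrow> cnj z \<in> {l1, l2, l3}"
    and im_sum: "Im l1 + Im l2 + Im l3 = 0"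
  obtains (real) "Im l1 = 0" "Im l2 = 0" "Im l3 = 0"
    | (conj_pair) w r where "Im r = 0" "{#l1, l2, l3#} = {#w, cnj w, r#}"
proof (cases "Im l1 = 0")
  case False
  then have "cnj l1 \<noteq> l1" by (simp add: complex_eq_iff)
  with closed[of l1] have "cnj l1 = l2 \<or> cnj l1 = l3" by auto
  then show ?thesis
  proof
    assume "cnj l1 = l2"
    with im_sum have "Im l3 = 0" by auto
    with conj_pair[of l3 l1] \<open>cnj l1 = l2\<close> show ?thesis by simp
  next
    assume "cnj l1 = l3"
    with im_sum have "Im l2 = 0" by auto
    with conj_pair[of l2 l1] \<open>cnj l1 = l3\<close> show ?thesis by (simp add: add_mset_commute)
  qed
next
  case real1: True
  show ?thesis
  proof (cases "Im l2 = 0")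
    case True
    with real1 im_sum real show ?thesis by simp
  next
    case False
    then have "cnj l2 \<noteq> l2" "cnj l2 \<noteq> l1" using real1 by (auto simp: complex_eq_iff)
    with closed[of l2] have "cnj l2 = l3" by auto
    with conj_pair[of l1 l2] real1 show ?thesis by (simp add: add_mset_commute)
  qed
qed

lemma real_triple_le_iff_prod_nonneg:
  fixes a1 a2 a3 t :: real
  assumes "0 \<le> a1" "0 \<le> a2" "0 \<le> a3" "a1 + a2 + a3 \<le> 2 * t"
  shows "(a1 \<le> t \<and> a2 \<le> t \<and> a3 \<le> t) \<longleftrightarrow> 0 \<le> (t - a1) * (t - a2) * (t - a3)"
proof
  assume "a1 \<le> t \<and> a2 \<le> t \<and> a3 \<le> t"
  then show "0 \<le> (t - a1) * (t - a2) * (t - a3)" by simp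
next
  have neg: "x * y * z < 0" if "x < 0" "0 < y" "0 < z" for x y z :: real
    using that by (simp add: mult_neg_pos mult_pos_pos)
  assume prod: "0 \<le> (t - a1) * (t - a2) * (t - a3)"
  show "a1 \<le> t \<and> a2 \<le> t \<and> a3 \<le> t"
  proof (rule ccontr)
    assume "\<not> (a1 \<le> t \<and> a2 \<le> t \<and> a3 \<le> t)"
    \<comment> \<open>the three numbers sum to at most \<open>2 t\<close>, so at most one of them exceeds \<open>t\<close>\<close>
    then consider "a1 > t" "a2 < t" "a3 < t" | "a2 > t" "a1 < t" "a3 < t" | "a3 > t" "a1 < t" "a2 < t"
      using assms by linarith
    then show False
      using prod neg[of "t - a1" "t - a2" "t - a3"] neg[of "t - a2" "t - a1" "t - a3"]
        neg[of "t - a3" "t - a1" "t - a2"]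
      by cases (simp_all add: ac_simps)
  qed
qed

lemma conj_pair_le_iff_prod_nonneg:
  fixes a b r t :: real
  assumes "0 \<le> a" "0 \<le> r" "2 * a + r \<le> 2 * t"
  shows "(a \<le> t \<and> r \<le> t) \<longleftrightarrow> 0 \<le> ((t - a)\<^sup>2 + b\<^sup>2) * (t - r)"
proof (cases "(t - a)\<^sup>2 + b\<^sup>2 = 0")
  case True
  then have "a = t" by (simp add: add_nonneg_eq_0_iff)
  with assms True show ?thesis by simp
next
  case False
  then have "0 < (t - a)\<^sup>2 + b\<^sup>2" by (simp add: add_nonneg_nonneg order_le_neq_trans)
  with assms show ?thesis by (simp add: zero_le_mult_iff)
qed

lemma conj_closed_roots_re_le_iff:
  fixes l1 l2 l3 :: complex and s t :: real
  assumes closed: "\<And>z. z \<in> {l1, l2, l3} \<Longrightarrow> cnj z \<in> {l1, l2, l3}"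
    and sum: "l1 + l2 + l3 = of_real s" and s_le: "s \<le> 2 * t"
    and nonneg: "\<And>z. z \<in> {l1, l2, l3} \<Longrightarrow> 0 \<le> Re z"
  shows "(\<forall>z \<in> {l1, l2, l3}. Re z \<le> t)
    \<longleftrightarrow> 0 \<le> Re ((of_real t - l1) * (of_real t - l2) * (of_real t - l3))"
proof -
  have re_sum: "Re l1 + Re l2 + Re l3 = s" and im_sum: "Im l1 + Im l2 + Im l3 = 0"
    using arg_cong[OF sum, of Re] arg_cong[OF sum, of Im] by simp_all
  show ?thesis
  proof (rule conj_closed_triple_cases[OF closed im_sum])
    assume "Im l1 = 0" "Im l2 = 0" "Im l3 = 0"
    then show ?thesis
      using real_triple_le_iff_prod_nonneg[of "Re l1" "Re l2" "Re l3" t] nonneg re_sum s_le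
      by simp
  next
    fix w r
    assume real_r: "Im r = 0" and roots: "{#l1, l2, l3#} = {#w, cnj w, r#}"
    have set_eq: "{l1, l2, l3} = {w, cnj w, r}"
      using arg_cong[OF roots, of set_mset] by simp
    have prod_roots: "(of_real t - l1) * (of_real t - l2) * (of_real t - l3)
        = (of_real t - w) * (of_real t - cnj w) * (of_real t - r)"
      using arg_cong[OF roots, of "\<lambda>M. \<Prod>z\<in>#M. of_real t - z"] by (simp add: ac_simps)
    have prod_eq: "Re ((of_real t - l1) * (of_real t - l2) * (of_real t - l3))
        = ((t - Re w)\<^sup>2 + (Im w)\<^sup>2) * (t - Re r)"
      unfolding prod_roots using real_r by (simp add: power2_eq_square algebra_simps)
    have "2 * Re w + Re r = s"
      using arg_cong[OF roots, of "\<lambda>M. \<Sum>z\<in>#M. Re z"] re_sum by simp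
    moreover have "0 \<le> Re w" "0 \<le> Re r"
      using nonneg unfolding set_eq by auto
    ultimately show ?thesis
      unfolding set_eq prod_eq using conj_pair_le_iff_prod_nonneg[of "Re w" "Re r" t "Im w"] s_le
      by auto
  qed
qed

lemma char_poly_roots_real_3x3:
  fixes G :: "real mat"
  assumes G: "G \<in> carrier_mat 3 3"
  obtains l1 l2 l3 :: complex where
    "\<And>z. eigenvalue (map_mat complex_of_real G) z \<longleftrightarrow> z \<in> {l1, l2, l3}"
    "\<And>z. z \<in> {l1, l2, l3} \<Longrightarrow> cnj z \<in> {l1, l2, l3}"
    "l1 + l2 + l3 = of_real (mat_trace G)"
    "\<And>x. poly (char_poly G) x = Re ((of_real x - l1) * (of_real x - l2) * (of_real x - l3))"
proof -
  define Gc where "Gc = map_mat complex_of_real G"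
  have Gc: "Gc \<in> carrier_mat 3 3" using G by (simp add: Gc_def)
  have cp_real: "char_poly Gc = map_poly of_real (char_poly G)"
    unfolding Gc_def by (rule of_real_hom.char_poly_hom[OF G])
  obtain as where as: "char_poly Gc = (\<Prod>a\<leftarrow>as. [:-a, 1:])" "length as = 3"
    using char_poly_factorized[OF Gc] by blast
  then obtain l1 l2 l3 where "as = [l1, l2, l3]"
    by (auto simp: numeral_3_eq_3 length_Suc_conv)
  with as(1) have cp: "char_poly Gc = [:-l1, 1:] * [:-l2, 1:] * [:-l3, 1:]"
    by (simp only: list.map prod_list.Cons prod_list.Nil mult_1_right mult.assoc)
  have poly_cp: "poly (char_poly Gc) z = (z - l1) * (z - l2) * (z - l3)" for z
    unfolding cp by (simp del: mult_pCons_left mult_pCons_right)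
  have roots: "poly (char_poly Gc) z = 0 \<longleftrightarrow> z \<in> {l1, l2, l3}" for z
    unfolding poly_cp by auto
  show thesis
  proof (rule that)
    show "eigenvalue (map_mat complex_of_real G) z \<longleftrightarrow> z \<in> {l1, l2, l3}" for z
      using eigenvalue_root_char_poly[OF Gc] roots by (simp add: Gc_def)
    show "cnj z \<in> {l1, l2, l3}" if "z \<in> {l1, l2, l3}" for z
      using real_poly_cnj_root_iff[of "char_poly Gc" z] roots that
      by (simp add: cp_real coeff_map_poly)
    show "l1 + l2 + l3 = of_real (mat_trace G)"
      using sum_roots_char_poly_3x3[OF Gc cp] G by (simp add: Gc_def mat_trace_def)
    show "poly (char_poly G) x = Re ((of_real x - l1) * (of_real x - l2) * (of_real x - l3))" for x
    proof -
      have "poly (char_poly G) x = Re (poly (char_poly Gc) (of_real x))"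
        by (simp add: cp_real of_real_hom.poly_map_poly)
      then show ?thesis by (simp only: poly_cp)
    qed
  qed
qed

theorem mainTheorem2:
  fixes G :: "real mat" and \<alpha> :: real
  assumes G: "G \<in> carrier_mat 3 3"
    and nonneg: "\<And>z. eigenvalue (map_mat complex_of_real G) z \<Longrightarrow> Re z \<ge> 0"
    and alpha: "\<alpha> \<in> {1..2}"
  shows "(\<forall>z. eigenvalue (map_mat complex_of_real G) z \<longrightarrow> Re z \<le> mat_trace G / \<alpha>)
         \<longleftrightarrow> poly (char_poly G) (mat_trace G / \<alpha>) \<ge> 0"
proof -
  obtain l1 l2 l3 where ev: "\<And>z. eigenvalue (map_mat complex_of_real G) z \<longleftrightarrow> z \<in> {l1, l2, l3}"
    and closed: "\<And>z. z \<in> {l1, l2, l3} \<Longrightarrow> cnj z \<in> {l1, l2, l3}"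
    and sum: "l1 + l2 + l3 = of_real (mat_trace G)"
    and char_poly_eq: "\<And>x. poly (char_poly G) x
        = Re ((of_real x - l1) * (of_real x - l2) * (of_real x - l3))"
    using char_poly_roots_real_3x3[OF G] by blast
  have re_nonneg: "0 \<le> Re z" if "z \<in> {l1, l2, l3}" for z
    using nonneg ev that by blast
  have "0 \<le> mat_trace G"
    using arg_cong[OF sum, of Re] re_nonneg[of l1] re_nonneg[of l2] re_nonneg[of l3] by simp
  then have "\<alpha> * mat_trace G \<le> 2 * mat_trace G"
    using alpha by (intro mult_right_mono) auto
  then have bound: "mat_trace G \<le> 2 * (mat_trace G / \<alpha>)"
    using alpha by (simp add: field_simps)
  from conj_closed_roots_re_le_iff[OF closed sum bound re_nonneg] show ?thesis
    unfolding ev char_poly_eq by auto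
qed

end
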